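(* For any policy in the class $\Pi$ (with parameters $T,\boldsymbol\gamma,L,Y$), if $$n\lambda<\min_{\eta\in\mathcal S_n}\ \min_{m\in[n]}\ \frac{\sum_{l=1}^m\mu_{\eta(l)}}{\sum_{l=1}^m f_{l,\eta}},$$ (equivalently, $n\lambda\sum_{l=1}^m f_{l,\eta}<\sum_{l=1}^m\mu_{\eta(l)}$ for all $\eta\in\mathcal S_n$, $m\in[n]$), then the Markov chain $\{\mathbf X(t)\}_{t\ge0}$ is positive recurrent.
   Context: Model. Fix $n\ge1$, $[n]=\{1,\dots,n\}$, $\mathcal S_n$ the set of permutations of $[n]$, $e_1,\dots,e_n$ the standard basis of $\mathbb R^n$. Time is discrete, $t=0,1,2,\dots$. There are $n$ single-server FIFO queues with infinite buffers; $\mathbf Q(t)\in\mathbb Z_{\ge0}^n$ is the queue-length vector at the start of slot $t$. Arrivals $A(t)\in\mathbb Z_{\ge0}$ are i.i.d. over $t$ with $E[A(1)]=n\lambda$, $\mathrm{Var}(A(1))=n\sigma_\lambda^2$, $A(1)\le nA_{\max}$ a.s. Potential services $\mathbf S(t)\in\mathbb Z_{\ge0}^n$ are i.i.d. over $t$, independent of arrivals, with $E[S_l(1)]=\mu_l>0$, $\mathrm{Var}(S_l(1))=\sigma_l^2$, $S_l(1)\le S_{\max}$ a.s., and $\mu_1\le\dots\le\mu_n$. All $A(t)$ arrivals of slot $t$ go to one queue, encoded by $\mathbf Z(t)\in\{e_1,\dots,e_n\}$, and $\mathbf Q(t+1)=[\mathbf Q(t)+A(t)\mathbf Z(t)-\mathbf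 S(t)]^+=\mathbf Q(t)+A(t)\mathbf Z(t)-\mathbf S(t)+\mathbf U(t)$, where $\mathbf U(t)\ge0$ is the unused service ($0\le U_l(t)\le S_l(t)$, $Q_l(t+1)U_l(t)=0$). Policy class $\Pi$. A policy is given by an integer $T\ge1$, a vector $\boldsymbol\gamma\in(0,\infty)^n$, a sorting map $L$ and a decision map $Y$. Let $\{V_k\},\{W_k\}$ be i.i.d. Unif$[0,1]$ sequences, independent of each other and of arrivals and services. At each sampling time $kT$ the dispatcher forms a permutation $\eta_k=L\big((Q_l(kT)/\gamma_l)_{l=1}^n,V_k\big)\in\mathcal S_n$ satisfying $Q_{\eta_k(1)}(kT)/\gamma_{\eta_k(1)}\ge\dots\ge Q_{\eta_k(n)}(kT)/\gamma_{\eta_k(n)}$ ($\eta_k(l)$ is the index of the $l$-th longest scaled queue), then draws $\phi(k)=Y(\eta_k,\boldsymbol\mu,W_k)=(\phi_1(k),\dots,\phi_T(k))\in\{e_1,\dots,e_n\}^T$, and sets $\mathbf Z(kT+j)=\phi_{j+1}(k)$ for $j=0,\dots,T-1$. The process $\mathbf X(t)=(\mathbf Q(t),\phi(\lfloor t/T\rfloor),t-T\lfloor t/T\rfloor)$ is a discrete-time Markov chain. Dispatching statistics. For $\eta\in\mathcal S_n$, $l\in[n]$, let $N_\eta(l)=\sum_{j=1}^T(\phi_j)_{\eta(l)}$ where $\phi=Y(\eta,\boldsymbol\mu,W)$, $W\sim$ Unif$[0,1]$ (the number of slots of a frame in which arrivals go to the $l$-th longest scaled queue when the frame's permutation is $\eta$).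 Define $f_{l,\eta}=E[N_\eta(l)/T]$ and $\tau^2_{l,\eta}=\mathrm{Var}(N_\eta(l)/T)$; thus $f_{l,\eta}\ge0$ and $\sum_l f_{l,\eta}=1$. Convention: $a/0=+\infty$ for $a>0$. *)

theory Defs
  imports "HOL-Probability.Probability"
begin

text \<open>Queues are indexed by 0..<n (paper: 1..n). A state of the chain
 X(t) = (Q(t), phi(floor(t/T)), t mod T) is a triple (q, ph, j):
 q = queue lengths (list of length n), ph = frame decision (list of length T
 of queue indices; index i encodes e_(i+1)), j = position inside the frame.\<close>

type_synonym qstate = "nat list \<times> nat list \<times> nat"

definition unifm :: "real measure" where
  "unifm = uniform_measure lborel {0..1}"

definition frame_decision ::
  "((nat \<Rightarrow> real) \<Rightarrow> real \<Rightarrow> (nat \<Rightarrow> nat)) \<Rightarrow> ((nat \<Rightarrow> nat) \<Rightarrow> (nat \<Rightarrow> real) \<Rightarrow> real \<Rightarrow> nat list)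
   \<Rightarrow> (nat \<Rightarrow> real) \<Rightarrow> (nat \<Rightarrow> real) \<Rightarrow> nat list \<Rightarrow> nat list measure" where
  "frame_decision L Y \<gamma> \<mu> q =
     bind unifm (\<lambda>v. bind unifm (\<lambda>w.
       return (count_space UNIV) (Y (L (\<lambda>l. real (q ! l) / \<gamma> l) v) \<mu> w)))"

definition queue_update :: "nat \<Rightarrow> nat list \<Rightarrow> nat \<Rightarrow> nat \<Rightarrow> nat list \<Rightarrow> nat list" where
  "queue_update n q z a s =
     map (\<lambda>l. nat (int (q ! l) + (if l = z then int a else 0) - int (s ! l))) [0..<n]"

definition dispatch_kernel ::
  "nat \<Rightarrow> nat \<Rightarrow> (nat \<Rightarrow> real) \<Rightarrow> (nat \<Rightarrow> real)
   \<Rightarrow> ((nat \<Rightarrow> real) \<Rightarrow> real \<Rightarrow> (nat \<Rightarrow> nat)) \<Rightarrow> ((nat \<Rightarrow> nat) \<Rightarrow> (nat \<Rightarrow> real) \<Rightarrow> real \<Rightarrow> nat list)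
   \<Rightarrow> nat pmf \<Rightarrow> nat list pmf \<Rightarrow> qstate \<Rightarrow> qstate measure" where
  "dispatch_kernel n T \<gamma> \<mu> L Y pA pS = (\<lambda>(q, ph, j).
     bind (measure_pmf pA) (\<lambda>a. bind (measure_pmf pS) (\<lambda>s.
       let q' = queue_update n q (ph ! j) a s in
       if Suc j < T then return (count_space UNIV) (q', ph, Suc j)
       else bind (frame_decision L Y \<gamma> \<mu> q') (\<lambda>ph'. return (count_space UNIV) (q', ph', 0)))))"

definition valid_state :: "nat \<Rightarrow> nat \<Rightarrow> qstate \<Rightarrow> bool" where
  "valid_state n T x = (case x of (q, ph, j) \<Rightarrow>
     length q = n \<and> length ph = T \<and> j < T \<and> (\<forall>i\<in>set ph. i < n))"

definition f_stat :: "nat \<Rightarrow> ((nat \<Rightarrow> nat) \<Rightarrow> (nat \<Rightarrow> real) \<Rightarrow> real \<Rightarrow> nat list) \<Rightarrow> (nat \<Rightarrow> real)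
   \<Rightarrow> (nat \<Rightarrow> nat) \<Rightarrow> nat \<Rightarrow> real" where
  "f_stat T Y \<mu> \<eta> l =
     integral\<^sup>L unifm (\<lambda>w. real (card {j. j < T \<and> Y \<eta> \<mu> w ! j = \<eta> l}) / real T)"

text \<open>Generic countable-state Markov chain notions for a kernel K.
 avoid K A k x = P_x(X_1 \<notin> A, ..., X_k \<notin> A).\<close>
primrec avoid :: "('s \<Rightarrow> 's measure) \<Rightarrow> 's set \<Rightarrow> nat \<Rightarrow> 's \<Rightarrow> ennreal" where
  "avoid K A 0 x = 1"
| "avoid K A (Suc k) x = (\<integral>\<^sup>+ y. indicator (- A) y * avoid K A k y \<partial>K x)"

text \<open>E_x[tau_A^+], tau_A^+ = min{t \<ge> 1. X_t \<in> A}, as sum_k P_x(tau_A^+ > k).\<close>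
definition exp_hitting_time :: "('s \<Rightarrow> 's measure) \<Rightarrow> 's set \<Rightarrow> 's \<Rightarrow> ennreal" where
  "exp_hitting_time K A x = (\<Sum>k. avoid K A k x)"

definition pos_recurrent_state :: "('s \<Rightarrow> 's measure) \<Rightarrow> 's \<Rightarrow> bool" where
  "pos_recurrent_state K s \<longleftrightarrow> exp_hitting_time K {s} s < \<infinity>"

text \<open>Positive recurrence of a (possibly reducible) chain on state space S:
 from every state the set of positive recurrent states is reached in finite expected time.\<close>
definition positive_recurrent :: "('s \<Rightarrow> 's measure) \<Rightarrow> 's set \<Rightarrow> bool" where
  "positive_recurrent K S \<longleftrightarrow>
     (\<forall>x\<in>S. exp_hitting_time K {s. pos_recurrent_state K s} x < \<infinity>)"

end

theory Submission
  imports Defs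
begin

text \<open>Foster's criterion, with a Lyapunov function read off at frame boundaries. Let
  V(q) = \<Sum>_l q_l^2 / \<gamma>_l and let \<eta> sort the scaled queues decreasingly, so that
  x_l = q_\<eta>(l) / \<gamma>_\<eta>(l) is nonincreasing in l. Up to bounded terms, the expected increase of V
  over one frame is 2 \<Sum>_l x_l (n \<lambda> N_\<eta>(l) - T \<mu>_\<eta>(l)). By Abel summation this is a nonnegative
  combination of the prefix sums \<Sum>_{l<m} (n \<lambda> N_\<eta>(l) - T \<mu>_\<eta>(l)), whose expectations are at
  most -T \<delta> by the stability condition; so the drift is at most -2 T \<delta> x_0 plus a constant, and
  x_0 is at least the average scaled queue. For the chain, which also records the current frame
  and the position in it, "expected V at the end of the current frame plus the number of
  remaining slots" then decreases by one in expectation outside a finite set. Finally, reaching a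
  finite set in finite expected time yields positive recurrent states: points of the set that
  are left for good with positive probability can be removed one at a time.\<close>

section \<open>Expected hitting times and Foster's criterion\<close>

lemma suminf_kernel_recursion:
  fixes F :: "nat \<Rightarrow> 's \<Rightarrow> ennreal"
  assumes rec: "\<And>k x. F (Suc k) x = (\<integral>\<^sup>+ y. indicator (- A) y * F k y \<partial>measure_pmf (P x))"
  shows "(\<Sum>k. F k x) = F 0 x + (\<integral>\<^sup>+ y. indicator (- A) y * (\<Sum>k. F k y) \<partial>measure_pmf (P x))"
proof -
  have "(\<Sum>k. F k x) = (\<Sum>k. F (Suc k) x) + F 0 x"
    using suminf_offset[of "\<lambda>k. F k x" 1] by simp
  also have "(\<Sum>k. F (Suc k) x) = (\<integral>\<^sup>+ y. (\<Sum>k. indicator (- A) y * F k y) \<partial>measure_pmf (P x))"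
    unfolding rec by (rule nn_integral_suminf[symmetric]) simp
  finally show ?thesis by (simp add: add.commute)
qed

lemma suminf_kernel_recursion_le:
  fixes F :: "nat \<Rightarrow> 's \<Rightarrow> ennreal" and g :: "'s \<Rightarrow> ennreal"
  assumes rec: "\<And>k x. F (Suc k) x = (\<integral>\<^sup>+ y. indicator (- A) y * F k y \<partial>measure_pmf (P x))"
    and closed: "\<And>x. x \<in> S \<Longrightarrow> set_pmf (P x) \<subseteq> S"
    and super: "\<And>x. x \<in> S \<Longrightarrow> F 0 x + (\<integral>\<^sup>+ y. indicator (- A) y * g y \<partial>measure_pmf (P x)) \<le> g x"
    and x: "x \<in> S"
  shows "(\<Sum>k. F k x) \<le> g x"
proof -
  have "\<forall>x\<in>S. (\<Sum>k<N. F k x) \<le> g x" for N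
  proof (induction N)
    case (Suc N)
    show ?case
    proof
      fix x assume "x \<in> S"
      have "(\<Sum>k<N. F (Suc k) x) = (\<integral>\<^sup>+ y. indicator (- A) y * (\<Sum>k<N. F k y) \<partial>measure_pmf (P x))"
        unfolding rec sum_distrib_left by (rule nn_integral_sum[symmetric]) simp
      then have "(\<Sum>k<Suc N. F k x) = F 0 x + (\<integral>\<^sup>+ y. indicator (- A) y * (\<Sum>k<N. F k y) \<partial>measure_pmf (P x))"
        by (simp only: sum.lessThan_Suc_shift)
      also have "\<dots> \<le> F 0 x + (\<integral>\<^sup>+ y. indicator (- A) y * g y \<partial>measure_pmf (P x))"
        using Suc.IH closed[OF \<open>x \<in> S\<close>]
        by (intro add_left_mono nn_integral_mono_AE)
           (auto simp: AE_measure_pmf_iff intro!: mult_left_mono)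
      also have "\<dots> \<le> g x" using super[OF \<open>x \<in> S\<close>] .
      finally show "(\<Sum>k<Suc N. F k x) \<le> g x" .
    qed
  qed simp
  then show ?thesis using x by (intro suminf_le_const) auto
qed

lemma avoid_antimono: "B \<subseteq> A \<Longrightarrow> avoid K A k x \<le> avoid K B k x"
  by (induction k arbitrary: x) (auto intro!: nn_integral_mono mult_mono simp: indicator_def)

lemma exp_hitting_time_antimono: "B \<subseteq> A \<Longrightarrow> exp_hitting_time K A x \<le> exp_hitting_time K B x"
  unfolding exp_hitting_time_def by (intro suminf_le avoid_antimono) auto

lemma exp_hitting_time_first_step:
  "exp_hitting_time (\<lambda>x. measure_pmf (P x)) A x =
     1 + (\<integral>\<^sup>+ y. indicator (- A) y * exp_hitting_time (\<lambda>x. measure_pmf (P x)) A y \<partial>measure_pmf (P x))"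
  unfolding exp_hitting_time_def by (subst suminf_kernel_recursion) simp_all

lemma exp_hitting_time_le_superharmonic:
  fixes g :: "'s \<Rightarrow> ennreal"
  assumes "\<And>x. x \<in> S \<Longrightarrow> set_pmf (P x) \<subseteq> S"
    and "\<And>x. x \<in> S \<Longrightarrow> 1 + (\<integral>\<^sup>+ y. indicator (- A) y * g y \<partial>measure_pmf (P x)) \<le> g x"
    and "x \<in> S"
  shows "exp_hitting_time (\<lambda>x. measure_pmf (P x)) A x \<le> g x"
  unfolding exp_hitting_time_def using assms by (intro suminf_kernel_recursion_le) simp_all

lemma (in prob_space) AE_eq_1_if_nn_integral_ge_1:
  fixes h :: "'a \<Rightarrow> ennreal"
  assumes h: "h \<in> borel_measurable M" and le: "\<And>y. h y \<le> 1" and ge: "1 \<le> (\<integral>\<^sup>+ y. h y \<partial>M)"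
  shows "AE y in M. h y = 1"
proof -
  have "(\<integral>\<^sup>+ y. h y \<partial>M) \<le> (\<integral>\<^sup>+ y. 1 \<partial>M)" using le by (intro nn_integral_mono) auto
  then have "(\<integral>\<^sup>+ y. 1 - h y \<partial>M) = (\<integral>\<^sup>+ y. 1 \<partial>M) - (\<integral>\<^sup>+ y. h y \<partial>M)"
    using le h by (intro nn_integral_diff) (auto simp: emeasure_space_1 top_unique)
  also have "\<dots> = 0" using ge by (simp add: emeasure_space_1 diff_eq_0_iff_ennreal)
  finally have "AE y in M. 1 - h y = 0" using h by (subst (asm) nn_integral_0_iff_AE) auto
  then show ?thesis by eventually_elim (use le in \<open>auto simp: diff_eq_0_iff_ennreal intro: antisym\<close>)
qed

text \<open>\<open>first_entrance_at P C c k x\<close> is the probability, started at \<open>x\<close>, that the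
  chain avoids \<open>C\<close> at times \<open>1, \<dots>, k\<close> and is at \<open>c\<close> at time \<open>k + 1\<close>.\<close>

primrec first_entrance_at :: "('s \<Rightarrow> 's pmf) \<Rightarrow> 's set \<Rightarrow> 's \<Rightarrow> nat \<Rightarrow> 's \<Rightarrow> ennreal" where
  "first_entrance_at P C c 0 x = emeasure (measure_pmf (P x)) {c}"
| "first_entrance_at P C c (Suc k) x =
     (\<integral>\<^sup>+ y. indicator (- C) y * first_entrance_at P C c k y \<partial>measure_pmf (P x))"

definition first_entrance_prob :: "('s \<Rightarrow> 's pmf) \<Rightarrow> 's set \<Rightarrow> 's \<Rightarrow> 's \<Rightarrow> ennreal" where
  "first_entrance_prob P C c x = (\<Sum>k. first_entrance_at P C c k x)"

lemma first_entrance_prob_first_step: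
  "first_entrance_prob P C c x = emeasure (measure_pmf (P x)) {c} +
     (\<integral>\<^sup>+ y. indicator (- C) y * first_entrance_prob P C c y \<partial>measure_pmf (P x))"
  unfolding first_entrance_prob_def by (subst suminf_kernel_recursion) simp_all

lemma first_entrance_prob_le_1:
  assumes c: "c \<in> C"
  shows "first_entrance_prob P C c x \<le> 1"
  unfolding first_entrance_prob_def
proof (rule suminf_kernel_recursion_le[where S = UNIV and g = "\<lambda>_. 1"])
  fix x
  have "emeasure (measure_pmf (P x)) {c} + emeasure (measure_pmf (P x)) (- C)
      = emeasure (measure_pmf (P x)) ({c} \<union> - C)"
    using c by (intro plus_emeasure) auto
  then show "first_entrance_at P C c 0 x + (\<integral>\<^sup>+ y. indicator (- C) y * 1 \<partial>measure_pmf (P x)) \<le> 1"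
    by (simp add: measure_pmf.emeasure_le_1)
qed simp_all

lemma exp_hitting_time_Diff_singleton_le:
  fixes P :: "'s \<Rightarrow> 's pmf" and m :: ennreal
  defines "K \<equiv> \<lambda>x. measure_pmf (P x)"
  assumes c: "c \<in> C" and fixpoint: "exp_hitting_time K C c + first_entrance_prob P C c c * m = m"
  shows "exp_hitting_time K (C - {c}) x \<le> exp_hitting_time K C x + first_entrance_prob P C c x * m"
proof -
  define g where "g y = exp_hitting_time K C y + first_entrance_prob P C c y * m" for y
  have "exp_hitting_time K (C - {c}) x \<le> g x"
    unfolding K_def
  proof (rule exp_hitting_time_le_superharmonic[where S = UNIV])
    fix x
    let ?M = "measure_pmf (P x)"
    have split: "indicator (- (C - {c})) y * g y = indicator (- C) y * exp_hitting_time K C y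
        + m * (indicator (- C) y * first_entrance_prob P C c y) + indicator {c} y * m" for y
      using c fixpoint by (auto simp: indicator_def g_def algebra_simps)
    have "1 + (\<integral>\<^sup>+ y. indicator (- (C - {c})) y * g y \<partial>?M)
        = (1 + (\<integral>\<^sup>+ y. indicator (- C) y * exp_hitting_time K C y \<partial>?M))
          + m * (emeasure ?M {c} + (\<integral>\<^sup>+ y. indicator (- C) y * first_entrance_prob P C c y \<partial>?M))"
      unfolding split
      by (simp add: nn_integral_add nn_integral_cmult nn_integral_indicator_singleton algebra_simps)
    also have "\<dots> = g x"
      using exp_hitting_time_first_step[of P C x] first_entrance_prob_first_step[of P C c x]
      by (simp add: g_def K_def mult.commute)
    finally show "1 + (\<integral>\<^sup>+ y. indicator (- (C - {c})) y * g y \<partial>?M) \<le> g x" by simp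
  qed auto
  then show ?thesis by (simp add: g_def)
qed

lemma exp_hitting_time_Diff_singleton_finite:
  fixes P :: "'s \<Rightarrow> 's pmf"
  defines "K \<equiv> \<lambda>x. measure_pmf (P x)"
  assumes c: "c \<in> C" and fin_c: "exp_hitting_time K C c < \<infinity>"
    and transient: "first_entrance_prob P C c c < 1"
    and fin_x: "exp_hitting_time K C x < \<infinity>"
  shows "exp_hitting_time K (C - {c}) x < \<infinity>"
proof -
  define r where "r = enn2real (exp_hitting_time K C c)"
  define p where "p = enn2real (first_entrance_prob P C c c)"
  have hr: "exp_hitting_time K C c = ennreal r" using fin_c by (simp add: r_def)
  have pp: "first_entrance_prob P C c c = ennreal p"
    using neq_top_trans[OF ennreal_one_neq_top first_entrance_prob_le_1[OF c, of P c]]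
    by (simp add: p_def ennreal_enn2real_if)
  have p1: "p < 1" using transient unfolding pp by simp
  txt \<open>From \<open>c\<close> the chain reaches \<open>C\<close> in \<open>r\<close> expected steps, landing at \<open>c\<close> again with
    probability \<open>p\<close>; so the solution \<open>m\<close> of \<open>m = r + p m\<close> bounds the time to reach \<open>C - {c}\<close>.\<close>
  define m where "m = r / (1 - p)"
  have "0 \<le> r" and "0 \<le> p" by (simp_all add: r_def p_def)
  moreover have "0 \<le> m" using \<open>0 \<le> r\<close> p1 by (simp add: m_def)
  moreover have "r + p * m = m" using p1 by (simp add: m_def field_simps)
  ultimately have "exp_hitting_time K C c + first_entrance_prob P C c c * ennreal m = ennreal m"
    by (simp add: hr pp ennreal_mult[symmetric] ennreal_plus[symmetric] del: ennreal_plus)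
  then have "exp_hitting_time K (C - {c}) x \<le> exp_hitting_time K C x + first_entrance_prob P C c x * ennreal m"
    unfolding K_def by (intro exp_hitting_time_Diff_singleton_le[OF c]) simp
  also have "\<dots> < \<infinity>"
    using fin_x first_entrance_prob_le_1[OF c, of P x]
    by (simp add: ennreal_mult_less_top order.strict_trans1 less_top)
  finally show ?thesis .
qed

lemma first_entrance_prob_ge_1_AE:
  assumes c: "c \<in> C" and ge: "1 \<le> first_entrance_prob P C c x"
  shows "AE y in measure_pmf (P x). (y \<in> C \<longrightarrow> y = c) \<and> (y \<notin> C \<longrightarrow> 1 \<le> first_entrance_prob P C c y)"
proof -
  define h where "h y = indicator {c} y + indicator (- C) y * first_entrance_prob P C c y" for y
  have "first_entrance_prob P C c x = (\<integral>\<^sup>+ y. h y \<partial>measure_pmf (P x))"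
    unfolding h_def first_entrance_prob_first_step[of P C c x] by (simp add: nn_integral_add)
  moreover have "h y \<le> 1" for y
    using c first_entrance_prob_le_1[OF c, of P y] by (auto simp: h_def indicator_def)
  ultimately have "AE y in measure_pmf (P x). h y = 1"
    using ge by (intro measure_pmf.AE_eq_1_if_nn_integral_ge_1) auto
  then show ?thesis
  proof eventually_elim
    case (elim y)
    then show ?case using c by (cases "y = c") (auto simp: h_def indicator_def)
  qed
qed

lemma exp_hitting_time_singleton_le:
  fixes P :: "'s \<Rightarrow> 's pmf"
  defines "K \<equiv> \<lambda>x. measure_pmf (P x)"
  assumes c: "c \<in> C" and recurrent: "1 \<le> first_entrance_prob P C c c"
  shows "exp_hitting_time K {c} c \<le> exp_hitting_time K C c"
proof -
  define g where "g y = (if 1 \<le> first_entrance_prob P C c y then exp_hitting_time K C y else \<top>)" for y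
  have "exp_hitting_time K {c} x \<le> g x" for x
    unfolding K_def
  proof (rule exp_hitting_time_le_superharmonic[where S = UNIV])
    fix x
    show "1 + (\<integral>\<^sup>+ y. indicator (- {c}) y * g y \<partial>measure_pmf (P x)) \<le> g x"
    proof (cases "1 \<le> first_entrance_prob P C c x")
      case True
      have "(\<integral>\<^sup>+ y. indicator (- {c}) y * g y \<partial>measure_pmf (P x))
          = (\<integral>\<^sup>+ y. indicator (- C) y * exp_hitting_time K C y \<partial>measure_pmf (P x))"
        using first_entrance_prob_ge_1_AE[OF c True]
      proof (intro nn_integral_cong_AE, eventually_elim)
        case (elim y)
        show ?case
        proof (cases "y \<in> C")
          case True
          then show ?thesis using elim c by simp
        next
          case False
          then show ?thesis using elim c by (auto simp: g_def indicator_def)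
        qed
      qed
      then show ?thesis
        using True exp_hitting_time_first_step[of P C x] by (simp add: g_def K_def)
    qed (simp add: g_def)
  qed auto
  from this[of c] show ?thesis using recurrent by (simp add: g_def)
qed

text \<open>Induction on the finite set \<open>C\<close>: a transient point of \<open>C\<close> can be removed from
  it, and once every point of \<open>C\<close> returns to itself before visiting the rest of \<open>C\<close>
  almost surely, all of them are positive recurrent.\<close>

lemma positive_recurrent_if_finite_set_reached:
  fixes P :: "'s \<Rightarrow> 's pmf"
  defines "K \<equiv> \<lambda>x. measure_pmf (P x)"
  assumes fin: "finite C" and sub: "C \<subseteq> S" and reached: "\<forall>x\<in>S. exp_hitting_time K C x < \<infinity>"
  shows "positive_recurrent K S"
  using fin sub reached
proof (induction C rule: finite_psubset_induct)
  case (psubset C)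
  show ?case
  proof (cases "\<exists>c\<in>C. first_entrance_prob P C c c < 1")
    case True
    then obtain c where c: "c \<in> C" and transient: "first_entrance_prob P C c c < 1" by blast
    have "\<forall>x\<in>S. exp_hitting_time K (C - {c}) x < \<infinity>"
      using psubset.prems c transient unfolding K_def by (blast intro: exp_hitting_time_Diff_singleton_finite)
    then show ?thesis using psubset c by (intro psubset.IH[of "C - {c}"]) auto
  next
    case False
    have "C \<subseteq> {s. pos_recurrent_state K s}"
    proof
      fix c assume c: "c \<in> C"
      then have "exp_hitting_time K {c} c \<le> exp_hitting_time K C c"
        using False unfolding K_def by (intro exp_hitting_time_singleton_le) (auto simp: not_less)
      also have "\<dots> < \<infinity>" using psubset c by blast
      finally show "c \<in> {s. pos_recurrent_state K s}" by (simp add: pos_recurrent_state_def)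
    qed
    then have "exp_hitting_time K {s. pos_recurrent_state K s} x \<le> exp_hitting_time K C x" for x
      by (rule exp_hitting_time_antimono)
    then show ?thesis
      using psubset.prems unfolding positive_recurrent_def by (meson le_less_trans)
  qed
qed

theorem positive_recurrent_Foster:
  fixes P :: "'s \<Rightarrow> 's pmf" and V :: "'s \<Rightarrow> real"
  assumes closed: "\<And>x. x \<in> S \<Longrightarrow> set_pmf (P x) \<subseteq> S"
    and integrable: "\<And>x. x \<in> S \<Longrightarrow> integrable (measure_pmf (P x)) V"
    and nonneg: "\<And>x. 0 \<le> V x"
    and drift: "\<And>x. x \<in> S \<Longrightarrow> x \<notin> C \<Longrightarrow> measure_pmf.expectation (P x) V + 1 \<le> V x"
    and fin: "finite C" and sub: "C \<subseteq> S"
  shows "positive_recurrent (\<lambda>x. measure_pmf (P x)) S"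
proof -
  have nn: "(\<integral>\<^sup>+ y. ennreal (V y) \<partial>P x) = ennreal (measure_pmf.expectation (P x) V)" if "x \<in> S" for x
    using integrable[OF that] nonneg by (intro nn_integral_eq_integral) auto
  define g where "g x = (if x \<in> C then 1 + (\<integral>\<^sup>+ y. ennreal (V y) \<partial>P x) else ennreal (V x))" for x
  have "exp_hitting_time (\<lambda>x. measure_pmf (P x)) C x \<le> g x" if "x \<in> S" for x
  proof (rule exp_hitting_time_le_superharmonic[OF closed _ that])
    fix x assume x: "x \<in> S"
    have le: "(\<integral>\<^sup>+ y. indicator (- C) y * g y \<partial>P x) \<le> (\<integral>\<^sup>+ y. ennreal (V y) \<partial>P x)"
      by (intro nn_integral_mono) (auto simp: g_def indicator_def)
    show "1 + (\<integral>\<^sup>+ y. indicator (- C) y * g y \<partial>P x) \<le> g x"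
    proof (cases "x \<in> C")
      case False
      have "1 + (\<integral>\<^sup>+ y. indicator (- C) y * g y \<partial>P x) \<le> 1 + (\<integral>\<^sup>+ y. ennreal (V y) \<partial>P x)"
        using le by (rule add_left_mono)
      also have "\<dots> = ennreal (measure_pmf.expectation (P x) V + 1)"
        using nn[OF x] nonneg by (simp add: ennreal_plus integral_nonneg_AE add.commute)
      also have "\<dots> \<le> ennreal (V x)" using drift[OF x False] by (rule ennreal_leI)
      finally show ?thesis using False by (simp add: g_def)
    qed (use le in \<open>simp add: g_def add_left_mono\<close>)
  qed
  moreover have "g x < \<infinity>" if "x \<in> S" for x
    using nn[OF that] by (simp add: g_def)
  ultimately show ?thesis
    using fin sub by (intro positive_recurrent_if_finite_set_reached) (auto intro: le_less_trans)
qed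

section \<open>Probability measures on countable types\<close>

lemma prob_space_unifm: "prob_space unifm"
  unfolding unifm_def by (intro prob_space_uniform_measure) auto

lemma space_unifm [simp]: "space unifm = UNIV"
  by (simp add: unifm_def)

lemma sets_unifm [simp]: "sets unifm = sets borel"
  by (simp add: unifm_def)

lemma AE_unifm: "AE v in unifm. v \<in> {0..1}"
  unfolding unifm_def by (subst AE_uniform_measure) auto

text \<open>No measurability of \<open>f\<close> is needed: \<open>distr\<close> along any map is a subprobability
  measure, and \<open>bind\<close> is \<open>join\<close> after \<open>distr\<close>.\<close>

lemma bind_return_in_subprob_algebra:
  fixes f :: "'a \<Rightarrow> 'b"
  assumes M: "subprob_space M"
  shows "bind M (\<lambda>w. return (count_space UNIV) (f w)) \<in> space (subprob_algebra (count_space UNIV))"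
proof -
  let ?N = "count_space (UNIV :: 'b set)"
  let ?F = "\<lambda>w. return ?N (f w)"
  let ?D = "distr M (subprob_algebra ?N) ?F"
  have "return ?N undefined \<in> space (subprob_algebra ?N)"
    by (simp add: space_subprob_algebra prob_space_imp_subprob_space prob_space_return)
  then have ne: "space ?D \<noteq> {}" by auto
  have "emeasure ?D (space ?D) \<le> 1"
    unfolding distr_def using subprob_space.subprob_emeasure_le_1[OF M]
    by (simp add: emeasure_measure_of_conv)
  then have "subprob_space ?D" using ne by (rule subprob_spaceI)
  then have "join ?D \<in> space (subprob_algebra ?N)"
    by (intro measurable_space[OF measurable_join]) (simp add: space_subprob_algebra)
  moreover have "bind M ?F = join ?D"
    unfolding bind_nonempty[OF subprob_space.subprob_not_empty[OF M]]
    by (subst subprob_algebra_cong[of "?F (SOME x. x \<in> space M)" ?N]) simp_all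
  ultimately show ?thesis by simp
qed

lemma measure_pmf_Abs_pmf:
  fixes M :: "'a::countable measure"
  assumes "prob_space M" and sets: "sets M = UNIV"
  shows "measure_pmf (Abs_pmf M) = M"
proof -
  interpret prob_space M by fact
  have "AE x in M. measure M {x} \<noteq> 0"
  proof (rule AE_mp[OF AE_discrete_difference[of "{x. measure M {x} = 0}"]])
    show "emeasure M {x} = 0" if "x \<in> {x. measure M {x} = 0}" for x
      using that by (simp add: emeasure_eq_measure)
  qed (auto simp: sets)
  then show ?thesis by (intro Abs_pmf_inverse) (auto simp: sets prob_space_axioms)
qed

lemma expectation_bind_pmf_finite:
  fixes h :: "'b \<Rightarrow> real"
  assumes "finite (set_pmf p)" and "\<And>x. x \<in> set_pmf p \<Longrightarrow> finite (set_pmf (f x))"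
  shows "measure_pmf.expectation (bind_pmf p f) h
       = measure_pmf.expectation p (\<lambda>x. measure_pmf.expectation (f x) h)"
  using assms
  by (subst pmf_expectation_bind[of "set_pmf p"], simp_all,
      subst integral_measure_pmf_real[of "set_pmf p"], auto simp: mult.commute)

lemma expectation_mono_pmf_finite:
  fixes f g :: "'a \<Rightarrow> real"
  assumes "finite (set_pmf p)" and "\<And>x. x \<in> set_pmf p \<Longrightarrow> f x \<le> g x"
  shows "measure_pmf.expectation p f \<le> measure_pmf.expectation p g"
  using assms by (intro integral_mono_AE integrable_measure_pmf_finite) (auto simp: AE_measure_pmf_iff)

section \<open>The dispatching chain\<close>

locale dispatch_system =
  fixes n T :: nat and lam Amax :: real and Smax :: nat
    and \<mu> \<gamma> :: "nat \<Rightarrow> real" and pA :: "nat pmf" and pS :: "nat list pmf"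
    and L :: "(nat \<Rightarrow> real) \<Rightarrow> real \<Rightarrow> (nat \<Rightarrow> nat)"
    and Y :: "(nat \<Rightarrow> nat) \<Rightarrow> (nat \<Rightarrow> real) \<Rightarrow> real \<Rightarrow> nat list"
  assumes n_pos: "n \<ge> 1" and T_pos: "T \<ge> 1"
    and arr_mean: "measure_pmf.expectation pA real = real n * lam"
    and arr_bd: "\<forall>a\<in>set_pmf pA. real a \<le> real n * Amax"
    and srv_len: "\<forall>s\<in>set_pmf pS. length s = n \<and> (\<forall>l<n. s ! l \<le> Smax)"
    and srv_mean: "\<forall>l<n. measure_pmf.expectation pS (\<lambda>s. real (s ! l)) = \<mu> l"
    and gamma_pos: "\<forall>l<n. \<gamma> l > 0"
    and L_meas: "\<forall>x. L x \<in> measurable borel (count_space UNIV)"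
    and L_sort: "\<forall>x v. v \<in> {0..1} \<longrightarrow> L x v permutes {..<n} \<and>
                   (\<forall>i j. i \<le> j \<longrightarrow> j < n \<longrightarrow> x (L x v i) \<ge> x (L x v j))"
    and Y_meas: "\<forall>\<eta>. \<eta> permutes {..<n} \<longrightarrow> Y \<eta> \<mu> \<in> measurable borel (count_space UNIV)"
    and Y_range: "\<forall>\<eta> w. \<eta> permutes {..<n} \<longrightarrow> w \<in> {0..1} \<longrightarrow>
                   length (Y \<eta> \<mu> w) = T \<and> (\<forall>i\<in>set (Y \<eta> \<mu> w). i < n)"
    and stab: "\<forall>\<eta>. \<eta> permutes {..<n} \<longrightarrow> (\<forall>m\<in>{1..n}.
                 real n * lam * (\<Sum>l<m. f_stat T Y \<mu> \<eta> l) < (\<Sum>l<m. \<mu> (\<eta> l)))"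
begin

definition scaled_queue :: "nat list \<Rightarrow> nat \<Rightarrow> real" where
  "scaled_queue q l = real (q ! l) / \<gamma> l"

definition frame_law :: "(nat \<Rightarrow> nat) \<Rightarrow> nat list measure" where
  "frame_law \<eta> = bind unifm (\<lambda>w. return (count_space UNIV) (Y \<eta> \<mu> w))"

definition frames :: "nat list set" where
  "frames = {ph. length ph = T \<and> (\<forall>i\<in>set ph. i < n)}"

lemma AE_L_permutes: "AE v in unifm. L x v permutes {..<n}"
  using AE_unifm by eventually_elim (use L_sort in blast)

lemma measurable_L: "L x \<in> measurable unifm (count_space UNIV)"
  by (subst measurable_cong_sets[OF sets_unifm refl]) (use L_meas in blast)

lemma measurable_Y: "\<eta> permutes {..<n} \<Longrightarrow> Y \<eta> \<mu> \<in> measurable unifm (count_space UNIV)"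
  by (subst measurable_cong_sets[OF sets_unifm refl]) (use Y_meas in blast)

lemma frame_law_in_subprob_algebra: "frame_law \<eta> \<in> space (subprob_algebra (count_space UNIV))"
  unfolding frame_law_def
  by (intro bind_return_in_subprob_algebra prob_space_imp_subprob_space prob_space_unifm)

lemma nn_integral_frame_law:
  assumes "\<eta> permutes {..<n}"
  shows "(\<integral>\<^sup>+ y. f y \<partial>frame_law \<eta>) = (\<integral>\<^sup>+ w. f (Y \<eta> \<mu> w) \<partial>unifm)"
  unfolding frame_law_def
  by (subst nn_integral_bind[where B = "count_space UNIV"])
     (auto simp: nn_integral_return intro: measurable_compose[OF measurable_Y[OF assms] return_measurable])

lemma frame_decision_eq_bind:
  "frame_decision L Y \<gamma> \<mu> q = bind unifm (\<lambda>v. frame_law (L (scaled_queue q) v))"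
  unfolding frame_decision_def frame_law_def scaled_queue_def by simp

lemma measurable_frame_law_L:
  "(\<lambda>v. frame_law (L x v)) \<in> measurable unifm (subprob_algebra (count_space UNIV))"
  using frame_law_in_subprob_algebra
  by (intro measurable_compose[OF measurable_L]) simp

lemma sets_frame_decision: "sets (frame_decision L Y \<gamma> \<mu> q) = sets (count_space UNIV)"
  unfolding frame_decision_eq_bind
  by (subst sets_bind[where N = "count_space UNIV"])
     (use frame_law_in_subprob_algebra in \<open>auto simp: space_subprob_algebra\<close>)

lemma nn_integral_frame_decision:
  "(\<integral>\<^sup>+ y. f y \<partial>frame_decision L Y \<gamma> \<mu> q)
     = (\<integral>\<^sup>+ v. \<integral>\<^sup>+ w. f (Y (L (scaled_queue q) v) \<mu> w) \<partial>unifm \<partial>unifm)"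
  unfolding frame_decision_eq_bind
proof (subst nn_integral_bind[OF _ measurable_frame_law_L])
  show "(\<integral>\<^sup>+ v. \<integral>\<^sup>+ y. f y \<partial>frame_law (L (scaled_queue q) v) \<partial>unifm)
      = (\<integral>\<^sup>+ v. \<integral>\<^sup>+ w. f (Y (L (scaled_queue q) v) \<mu> w) \<partial>unifm \<partial>unifm)"
    using AE_L_permutes[of "scaled_queue q"]
    by (intro nn_integral_cong_AE, eventually_elim) (rule nn_integral_frame_law)
qed simp

lemma prob_space_frame_decision: "prob_space (frame_decision L Y \<gamma> \<mu> q)"
proof
  have "emeasure (frame_decision L Y \<gamma> \<mu> q) (space (frame_decision L Y \<gamma> \<mu> q))
      = (\<integral>\<^sup>+ y. 1 \<partial>frame_decision L Y \<gamma> \<mu> q)"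
    by (simp add: sets_eq_imp_space_eq[OF sets_frame_decision])
  also have "\<dots> = 1"
    unfolding nn_integral_frame_decision using prob_space.emeasure_space_1[OF prob_space_unifm] by simp
  finally show "emeasure (frame_decision L Y \<gamma> \<mu> q) (space (frame_decision L Y \<gamma> \<mu> q)) = 1" .
qed

definition frame_pmf :: "nat list \<Rightarrow> nat list pmf" where
  "frame_pmf q = Abs_pmf (frame_decision L Y \<gamma> \<mu> q)"

lemma measure_frame_pmf: "measure_pmf (frame_pmf q) = frame_decision L Y \<gamma> \<mu> q"
  unfolding frame_pmf_def by (rule measure_pmf_Abs_pmf[OF prob_space_frame_decision sets_frame_decision[simplified]])

lemma set_frame_pmf: "set_pmf (frame_pmf q) \<subseteq> frames"
proof -
  have "AE v in unifm. AE w in unifm. indicator (- frames) (Y (L (scaled_queue q) v) \<mu> w) = (0::ennreal)"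
    using AE_L_permutes[of "scaled_queue q"]
  proof eventually_elim
    case (elim v)
    show ?case using AE_unifm by eventually_elim (use elim Y_range in \<open>auto simp: frames_def\<close>)
  qed
  then have "AE v in unifm. (\<integral>\<^sup>+ w. indicator (- frames) (Y (L (scaled_queue q) v) \<mu> w) \<partial>unifm) = 0"
    by eventually_elim (simp add: nn_integral_cong_AE[where v = "\<lambda>_. 0"])
  then have "(\<integral>\<^sup>+ y. indicator (- frames) y \<partial>frame_pmf q) = 0"
    unfolding measure_frame_pmf nn_integral_frame_decision by (simp add: nn_integral_cong_AE[where v = "\<lambda>_. 0"])
  then show ?thesis
    by (subst (asm) nn_integral_0_iff_AE) (auto simp: AE_measure_pmf_iff indicator_def)
qed

definition step_pmf :: "qstate \<Rightarrow> qstate pmf" where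
  "step_pmf = (\<lambda>(q, ph, j). bind_pmf pA (\<lambda>a. bind_pmf pS (\<lambda>s.
       let q' = queue_update n q (ph ! j) a s in
       if Suc j < T then return_pmf (q', ph, Suc j)
       else bind_pmf (frame_pmf q') (\<lambda>ph'. return_pmf (q', ph', 0)))))"

lemma dispatch_kernel_eq_step_pmf: "dispatch_kernel n T \<gamma> \<mu> L Y pA pS = (\<lambda>x. measure_pmf (step_pmf x))"
proof
  fix x :: qstate
  obtain q ph j where x: "x = (q, ph, j)" by (cases x)
  show "dispatch_kernel n T \<gamma> \<mu> L Y pA pS x = measure_pmf (step_pmf x)"
    unfolding x dispatch_kernel_def step_pmf_def
    by (simp add: measure_pmf_bind Let_def, intro bind_cong refl)
       (auto simp: measure_pmf_bind return_pmf.rep_eq measure_frame_pmf)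
qed

abbreviation EA :: "(nat \<Rightarrow> real) \<Rightarrow> real" where
  "EA f \<equiv> measure_pmf.expectation pA f"

abbreviation ES :: "(nat list \<Rightarrow> real) \<Rightarrow> real" where
  "ES f \<equiv> measure_pmf.expectation pS f"

definition jump_bound :: real where
  "jump_bound = max 0 (real n * Amax) + real Smax"

lemma jump_bound_nonneg: "0 \<le> jump_bound"
  by (simp add: jump_bound_def)

lemma arrival_le_jump_bound: "a \<in> set_pmf pA \<Longrightarrow> real a \<le> jump_bound"
  using arr_bd by (force simp: jump_bound_def)

lemma service_le_jump_bound: "s \<in> set_pmf pS \<Longrightarrow> l < n \<Longrightarrow> real (s ! l) \<le> jump_bound"
  using srv_len by (force simp: jump_bound_def)

lemma finite_set_pmf_pA: "finite (set_pmf pA)"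
proof (rule finite_subset)
  show "set_pmf pA \<subseteq> {..nat \<lceil>jump_bound\<rceil>}"
  proof
    fix a assume "a \<in> set_pmf pA"
    then have "real a \<le> jump_bound" by (rule arrival_le_jump_bound)
    then show "a \<in> {..nat \<lceil>jump_bound\<rceil>}" by simp linarith
  qed
qed simp

lemma finite_set_pmf_pS: "finite (set_pmf pS)"
proof (rule finite_subset)
  show "set_pmf pS \<subseteq> {s. set s \<subseteq> {..Smax} \<and> length s = n}"
    using srv_len by (auto simp: in_set_conv_nth)
qed (rule finite_lists_length_eq, simp)

lemma finite_frames: "finite frames"
proof (rule finite_subset)
  show "frames \<subseteq> {s. set s \<subseteq> {..<n} \<and> length s = T}" by (auto simp: frames_def)
qed (rule finite_lists_length_eq, simp)

lemma finite_set_frame_pmf: "finite (set_pmf (frame_pmf q))"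
  using finite_subset[OF set_frame_pmf finite_frames] .

lemma finite_set_step_pmf: "finite (set_pmf (step_pmf x))"
  using finite_set_pmf_pA finite_set_pmf_pS finite_set_frame_pmf
  by (cases x) (auto simp: step_pmf_def Let_def)

lemma integrable_pA [simp]: "integrable (measure_pmf pA) (f :: nat \<Rightarrow> real)"
  by (rule integrable_measure_pmf_finite[OF finite_set_pmf_pA])

lemma integrable_pS [simp]: "integrable (measure_pmf pS) (f :: nat list \<Rightarrow> real)"
  by (rule integrable_measure_pmf_finite[OF finite_set_pmf_pS])

lemma lam_nonneg: "0 \<le> lam"
proof -
  have "0 \<le> EA real" by simp
  then show ?thesis using arr_mean n_pos by (simp add: zero_le_mult_iff)
qed

lemma scaled_queue_nonneg: "l < n \<Longrightarrow> 0 \<le> scaled_queue q l"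
  unfolding scaled_queue_def using gamma_pos by auto

lemma queue_update_nth:
  "l < n \<Longrightarrow> real (queue_update n q z a s ! l)
     = max 0 (real (q ! l) + ((if l = z then real a else 0) - real (s ! l)))"
  by (simp add: queue_update_def) linarith

lemma length_queue_update [simp]: "length (queue_update n q z a s) = n"
  by (simp add: queue_update_def)

lemma queue_update_change_le:
  assumes "l < n" and "a \<in> set_pmf pA" and "s \<in> set_pmf pS"
  shows "\<bar>real (queue_update n q z a s ! l) - real (q ! l)\<bar> \<le> jump_bound"
  using arrival_le_jump_bound[OF assms(2)] service_le_jump_bound[OF assms(3,1)]
  by (auto simp: queue_update_nth[OF assms(1)] max_def)

definition lyapunov :: "nat list \<Rightarrow> real" where
  "lyapunov q = (\<Sum>l<n. real (q ! l) ^ 2 / \<gamma> l)"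

definition quad_const :: real where
  "quad_const = (\<Sum>l<n. jump_bound ^ 2 / \<gamma> l)"

definition slot_drift :: "nat list \<Rightarrow> nat \<Rightarrow> real" where
  "slot_drift q z = (\<Sum>l<n. scaled_queue q l * ((if l = z then real n * lam else 0) - \<mu> l))"

lemma lyapunov_nonneg: "0 \<le> lyapunov q"
  unfolding lyapunov_def using gamma_pos by (intro sum_nonneg) auto

text \<open>The usual quadratic bound \<open>((x + d)\<^sup>+)\<^sup>2 \<le> x\<^sup>2 + 2 x d + d\<^sup>2\<close>, coordinatewise.\<close>

lemma lyapunov_queue_update_le:
  assumes a: "a \<in> set_pmf pA" and s: "s \<in> set_pmf pS"
  shows "lyapunov (queue_update n q z a s) \<le> lyapunov q
     + 2 * (\<Sum>l<n. scaled_queue q l * ((if l = z then real a else 0) - real (s ! l))) + quad_const"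
proof -
  have "real (queue_update n q z a s ! l) ^ 2 / \<gamma> l \<le> real (q ! l) ^ 2 / \<gamma> l
      + 2 * (scaled_queue q l * ((if l = z then real a else 0) - real (s ! l))) + jump_bound ^ 2 / \<gamma> l"
    if l: "l < n" for l
  proof -
    define d where "d = (if l = z then real a else 0) - real (s ! l)"
    have g: "\<gamma> l > 0" using gamma_pos l by auto
    have "\<bar>d\<bar> \<le> jump_bound"
      using arrival_le_jump_bound[OF a] service_le_jump_bound[OF s l] by (auto simp: d_def)
    then have "d ^ 2 \<le> jump_bound ^ 2" by (metis abs_le_square_iff abs_of_nonneg jump_bound_nonneg)
    moreover have "real (queue_update n q z a s ! l) ^ 2 \<le> (real (q ! l) + d) ^ 2"
      unfolding queue_update_nth[OF l] d_def[symmetric]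
      by (auto simp: max_def power2_eq_square intro: mult_mono)
    ultimately have "real (queue_update n q z a s ! l) ^ 2 \<le> real (q ! l) ^ 2 + 2 * real (q ! l) * d + jump_bound ^ 2"
      by (simp add: power2_eq_square algebra_simps)
    then show ?thesis
      using g by (simp add: scaled_queue_def d_def divide_right_mono add_divide_distrib[symmetric])
  qed
  then have "lyapunov (queue_update n q z a s) \<le> (\<Sum>l<n. real (q ! l) ^ 2 / \<gamma> l
      + 2 * (scaled_queue q l * ((if l = z then real a else 0) - real (s ! l))) + jump_bound ^ 2 / \<gamma> l)"
    unfolding lyapunov_def by (intro sum_mono) auto
  then show ?thesis
    by (simp add: lyapunov_def quad_const_def sum.distrib sum_distrib_left)
qed

lemma expected_lyapunov_queue_update_le:
  "EA (\<lambda>a. ES (\<lambda>s. lyapunov (queue_update n q z a s))) \<le> lyapunov q + 2 * slot_drift q z + quad_const"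
proof -
  have "EA (\<lambda>a. ES (\<lambda>s. lyapunov (queue_update n q z a s)))
      \<le> EA (\<lambda>a. ES (\<lambda>s. lyapunov q
           + 2 * (\<Sum>l<n. scaled_queue q l * ((if l = z then real a else 0) - real (s ! l))) + quad_const))"
    by (intro expectation_mono_pmf_finite finite_set_pmf_pA finite_set_pmf_pS lyapunov_queue_update_le)
  also have "\<dots> = lyapunov q + 2 * (\<Sum>l<n. scaled_queue q l
      * (EA (\<lambda>a. if l = z then real a else 0) - ES (\<lambda>s. real (s ! l)))) + quad_const"
    by (simp add: integral_sum integral_diff sum_distrib_left)
  also have "\<dots> = lyapunov q + 2 * slot_drift q z + quad_const"
    unfolding slot_drift_def using arr_mean srv_mean by (auto intro!: sum.cong)
  finally show ?thesis .
qed

primrec frame_lyapunov :: "nat list \<Rightarrow> nat \<Rightarrow> nat \<Rightarrow> nat list \<Rightarrow> real" where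
  "frame_lyapunov ph j 0 q = lyapunov q"
| "frame_lyapunov ph j (Suc k) q =
     EA (\<lambda>a. ES (\<lambda>s. frame_lyapunov ph (Suc j) k (queue_update n q (ph ! j) a s)))"

lemma frame_lyapunov_nonneg: "0 \<le> frame_lyapunov ph j k q"
  by (induction k arbitrary: j q) (simp_all add: lyapunov_nonneg integral_nonneg_AE)

definition lin_const :: real where
  "lin_const = (\<Sum>l<n. jump_bound / \<gamma> l * (real n * lam + \<bar>\<mu> l\<bar>))"

lemma lin_const_nonneg: "0 \<le> lin_const"
  unfolding lin_const_def using gamma_pos jump_bound_nonneg lam_nonneg by (intro sum_nonneg) auto

lemma slot_drift_queue_update_le:
  assumes a: "a \<in> set_pmf pA" and s: "s \<in> set_pmf pS"
  shows "slot_drift (queue_update n q z a s) z' \<le> slot_drift q z' + lin_const"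
proof -
  let ?q' = "queue_update n q z a s"
  have "scaled_queue ?q' l * c \<le> scaled_queue q l * c + jump_bound / \<gamma> l * (real n * lam + \<bar>\<mu> l\<bar>)"
    if l: "l < n" and c: "\<bar>c\<bar> \<le> real n * lam + \<bar>\<mu> l\<bar>" for l c
  proof -
    have g: "\<gamma> l > 0" using gamma_pos l by auto
    have "\<bar>scaled_queue ?q' l - scaled_queue q l\<bar> = \<bar>real (?q' ! l) - real (q ! l)\<bar> / \<gamma> l"
      using g by (simp add: scaled_queue_def diff_divide_distrib[symmetric])
    also have "\<dots> \<le> jump_bound / \<gamma> l"
      using queue_update_change_le[OF l a s] g by (simp add: divide_right_mono)
    finally have "\<bar>(scaled_queue ?q' l - scaled_queue q l) * c\<bar> \<le> jump_bound / \<gamma> l * (real n * lam + \<bar>\<mu> l\<bar>)"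
      unfolding abs_mult using c by (intro mult_mono) auto
    then show ?thesis by (simp add: algebra_simps)
  qed
  moreover have "\<bar>(if l = z' then real n * lam else 0) - \<mu> l\<bar> \<le> real n * lam + \<bar>\<mu> l\<bar>" for l
    using lam_nonneg abs_triangle_ineq4[of "real n * lam" "\<mu> l"] by auto
  ultimately show ?thesis
    unfolding slot_drift_def lin_const_def sum.distrib[symmetric] by (intro sum_mono) auto
qed

lemma frame_lyapunov_le:
  "frame_lyapunov ph j k q \<le> lyapunov q + 2 * (\<Sum>i<k. slot_drift q (ph ! (j + i)))
     + real k * quad_const + 2 * real k ^ 2 * lin_const"
proof (induction k arbitrary: j q)
  case (Suc k)
  let ?q' = "\<lambda>a s. queue_update n q (ph ! j) a s"
  define c where "c = 2 * (\<Sum>i<k. slot_drift q (ph ! (Suc j + i)))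
      + 2 * real k * lin_const + real k * quad_const + 2 * real k ^ 2 * lin_const"
  have "frame_lyapunov ph j (Suc k) q \<le> EA (\<lambda>a. ES (\<lambda>s. lyapunov (?q' a s) + c))"
    unfolding frame_lyapunov.simps
  proof (intro expectation_mono_pmf_finite finite_set_pmf_pA finite_set_pmf_pS)
    fix a s assume a: "a \<in> set_pmf pA" and s: "s \<in> set_pmf pS"
    have "(\<Sum>i<k. slot_drift (?q' a s) (ph ! (Suc j + i))) \<le> (\<Sum>i<k. slot_drift q (ph ! (Suc j + i)) + lin_const)"
      by (intro sum_mono slot_drift_queue_update_le[OF a s])
    then show "frame_lyapunov ph (Suc j) k (?q' a s) \<le> lyapunov (?q' a s) + c"
      using Suc.IH[of "Suc j" "?q' a s"] by (simp add: c_def sum.distrib)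
  qed
  also have "\<dots> = EA (\<lambda>a. ES (\<lambda>s. lyapunov (?q' a s))) + c"
    by simp
  also have "\<dots> \<le> lyapunov q + 2 * slot_drift q (ph ! j) + quad_const + c"
    using expected_lyapunov_queue_update_le by simp
  also have "\<dots> \<le> lyapunov q + 2 * (\<Sum>i<Suc k. slot_drift q (ph ! (j + i)))
      + real (Suc k) * quad_const + 2 * real (Suc k) ^ 2 * lin_const"
    using lin_const_nonneg unfolding sum.lessThan_Suc_shift
    by (simp add: c_def algebra_simps power2_eq_square)
  finally show ?case .
qed simp

end

section \<open>Drift over a frame\<close>

text \<open>Abel summation: with \<open>x\<close> nonincreasing and nonnegative, \<open>\<Sum> x\<^sub>l d\<^sub>l\<close> is a nonnegative
  combination of the partial sums of \<open>d\<close>, with total weight \<open>x\<^sub>0\<close>.\<close>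

lemma sorted_weighted_sum_le:
  fixes x d :: "nat \<Rightarrow> real"
  assumes dec: "\<And>i j. i \<le> j \<Longrightarrow> j < N \<Longrightarrow> x j \<le> x i"
    and partial: "\<And>m. 1 \<le> m \<Longrightarrow> m \<le> N \<Longrightarrow> (\<Sum>l<m. d l) \<le> - \<delta>"
    and nonneg: "0 \<le> x (N - 1)" and N: "1 \<le> N"
  shows "(\<Sum>l<N. x l * d l) \<le> - \<delta> * x 0"
proof -
  have "(\<Sum>l<M. x l * d l) \<le> x (M - 1) * (\<Sum>l<M. d l) - \<delta> * (x 0 - x (M - 1))"
    if "1 \<le> M" "M \<le> N" for M
    using that
  proof (induction M rule: nat_induct_at_least)
    case (Suc M)
    have "(x (M - 1) - x M) * (\<Sum>l<M. d l) \<le> (x (M - 1) - x M) * (- \<delta>)"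
      using dec[of "M - 1" M] partial[of M] Suc by (intro mult_left_mono) auto
    then show ?case using Suc by (simp add: algebra_simps)
  qed simp
  from this[OF N order_refl] have "(\<Sum>l<N. x l * d l) \<le> x (N - 1) * (\<Sum>l<N. d l) - \<delta> * (x 0 - x (N - 1))" .
  also have "x (N - 1) * (\<Sum>l<N. d l) \<le> x (N - 1) * (- \<delta>)"
    using nonneg partial[OF N order_refl] by (intro mult_left_mono)
  finally show ?thesis by (simp add: algebra_simps)
qed

context dispatch_system
begin

definition stability_margin :: real where
  "stability_margin = Min ((\<lambda>(\<eta>, m). (\<Sum>l<m. \<mu> (\<eta> l)) - real n * lam * (\<Sum>l<m. f_stat T Y \<mu> \<eta> l))
      ` ({\<eta>. \<eta> permutes {..<n}} \<times> {1..n}))"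

lemma stability_margin_pos: "0 < stability_margin"
  unfolding stability_margin_def using stab n_pos
  by (subst Min_gr_iff) (auto intro!: finite_imageI finite_cartesian_product finite_permutations permutes_id)

lemma stability_margin_le:
  assumes "\<eta> permutes {..<n}" and "m \<in> {1..n}"
  shows "real n * lam * (\<Sum>l<m. f_stat T Y \<mu> \<eta> l) - (\<Sum>l<m. \<mu> (\<eta> l)) \<le> - stability_margin"
proof -
  have "stability_margin \<le> (\<Sum>l<m. \<mu> (\<eta> l)) - real n * lam * (\<Sum>l<m. f_stat T Y \<mu> \<eta> l)"
    unfolding stability_margin_def using assms
    by (intro Min_le finite_imageI finite_cartesian_product finite_permutations) force+
  then show ?thesis by simp
qed

definition frame_count :: "nat list \<Rightarrow> nat \<Rightarrow> nat" where
  "frame_count ph l = card {i. i < T \<and> ph ! i = l}"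

definition frame_load :: "nat list \<Rightarrow> nat list \<Rightarrow> real" where
  "frame_load q ph = (\<Sum>l<n. scaled_queue q l * real (frame_count ph l))"

definition scaled_total :: "nat list \<Rightarrow> real" where
  "scaled_total q = (\<Sum>l<n. scaled_queue q l)"

lemma frame_count_le: "frame_count ph l \<le> T"
  unfolding frame_count_def by (rule card_mono[of "{..<T}", simplified, THEN order_trans]) auto

lemma frame_load_nonneg: "0 \<le> frame_load q ph"
  unfolding frame_load_def using scaled_queue_nonneg by (intro sum_nonneg) auto

lemma frame_load_le: "frame_load q ph \<le> real T * scaled_total q"
  unfolding frame_load_def scaled_total_def sum_distrib_left
proof (intro sum_mono)
  fix l assume "l \<in> {..<n}"
  then show "scaled_queue q l * real (frame_count ph l) \<le> real T * scaled_queue q l"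
    using mult_left_mono[OF of_nat_mono[OF frame_count_le] scaled_queue_nonneg]
    by (simp add: mult.commute)
qed

lemma integrable_frame_count:
  assumes "\<eta> permutes {..<n}"
  shows "integrable unifm (\<lambda>w. real (frame_count (Y \<eta> \<mu> w) l))"
proof (rule finite_measure.integrable_const_bound[where B = "real T"])
  show "finite_measure unifm" using prob_space_unifm by (simp add: prob_space_def)
  show "(\<lambda>w. real (frame_count (Y \<eta> \<mu> w) l)) \<in> borel_measurable unifm"
    by (rule measurable_compose[OF measurable_Y[OF assms]]) simp
qed (simp add: frame_count_le)

lemma integral_frame_count:
  "(\<integral>w. real (frame_count (Y \<eta> \<mu> w) (\<eta> l)) \<partial>unifm) = real T * f_stat T Y \<mu> \<eta> l"
  using T_pos by (simp add: f_stat_def frame_count_def)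

lemma expected_frame_load_le:
  assumes v: "v \<in> {0..1}"
  shows "real n * lam * (\<integral>w. frame_load q (Y (L (scaled_queue q) v) \<mu> w) \<partial>unifm)
      \<le> real T * ((\<Sum>l<n. scaled_queue q l * \<mu> l) - stability_margin * scaled_total q / real n)"
proof -
  define \<eta> where "\<eta> = L (scaled_queue q) v"
  have perm: "\<eta> permutes {..<n}"
    and sorted: "\<And>i j. i \<le> j \<Longrightarrow> j < n \<Longrightarrow> scaled_queue q (\<eta> j) \<le> scaled_queue q (\<eta> i)"
    using L_sort v unfolding \<eta>_def by blast+
  define x where "x i = scaled_queue q (\<eta> i)" for i
  define d where "d i = real n * lam * f_stat T Y \<mu> \<eta> i - \<mu> (\<eta> i)" for i
  have reindex: "(\<Sum>l<n. g l) = (\<Sum>l<n. g (\<eta> l))" for g :: "nat \<Rightarrow> real"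
    by (subst sum.permute[OF perm]) (simp add: comp_def)
  have "(\<integral>w. frame_load q (Y \<eta> \<mu> w) \<partial>unifm)
      = (\<Sum>l<n. scaled_queue q l * (\<integral>w. real (frame_count (Y \<eta> \<mu> w) l) \<partial>unifm))"
    unfolding frame_load_def using integrable_frame_count[OF perm] by (simp add: integral_sum)
  also have "\<dots> = real T * (\<Sum>l<n. x l * f_stat T Y \<mu> \<eta> l)"
    by (subst reindex) (simp add: x_def integral_frame_count sum_distrib_left algebra_simps)
  finally have "real n * lam * (\<integral>w. frame_load q (Y \<eta> \<mu> w) \<partial>unifm)
      = real T * ((\<Sum>l<n. x l * d l) + (\<Sum>l<n. scaled_queue q l * \<mu> l))"
    by (subst (2) reindex) (simp add: x_def d_def sum_distrib_left algebra_simps sum.distrib[symmetric])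
  also have "(\<Sum>l<n. x l * d l) \<le> - stability_margin * x 0"
  proof (rule sorted_weighted_sum_le)
    show "(\<Sum>l<m. d l) \<le> - stability_margin" if "1 \<le> m" "m \<le> n" for m
      using stability_margin_le[OF perm, of m] that
      by (simp add: d_def sum_subtractf sum_distrib_left)
    show "0 \<le> x (n - 1)"
      unfolding x_def using permutes_in_image[OF perm, of "n - 1"] n_pos by (intro scaled_queue_nonneg) simp
  qed (use sorted n_pos in \<open>auto simp: x_def\<close>)
  also have "- stability_margin * x 0 \<le> - stability_margin * scaled_total q / real n"
  proof -
    have "scaled_total q = (\<Sum>l<n. x l)" unfolding scaled_total_def x_def by (rule reindex)
    also have "\<dots> \<le> real n * x 0" using sorted sum_mono[of "{..<n}" x "\<lambda>_. x 0"] by (simp add: x_def)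
    finally show ?thesis
      using n_pos stability_margin_pos by (simp add: divide_le_eq mult.commute mult_left_mono)
  qed
  finally show ?thesis using T_pos unfolding \<eta>_def by (simp add: mult_left_mono)
qed

lemma expectation_frame_pmf_le:
  fixes f :: "nat list \<Rightarrow> real"
  assumes nonneg: "\<And>ph. 0 \<le> f ph" and bounded: "\<And>ph. f ph \<le> B"
    and le: "\<And>v. v \<in> {0..1} \<Longrightarrow> (\<integral>w. f (Y (L (scaled_queue q) v) \<mu> w) \<partial>unifm) \<le> c"
  shows "measure_pmf.expectation (frame_pmf q) f \<le> c"
proof -
  have "0 \<le> (\<integral>w. f (Y (L (scaled_queue q) 0) \<mu> w) \<partial>unifm)"
    using nonneg by (intro Bochner_Integration.integral_nonneg) auto
  then have c: "0 \<le> c" using le[of 0] by simp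
  have "ennreal (measure_pmf.expectation (frame_pmf q) f) = (\<integral>\<^sup>+ ph. ennreal (f ph) \<partial>frame_pmf q)"
    using nonneg by (intro nn_integral_eq_integral[symmetric] integrable_measure_pmf_finite finite_set_frame_pmf) auto
  also have "\<dots> = (\<integral>\<^sup>+ v. \<integral>\<^sup>+ w. ennreal (f (Y (L (scaled_queue q) v) \<mu> w)) \<partial>unifm \<partial>unifm)"
    unfolding measure_frame_pmf by (rule nn_integral_frame_decision)
  also have "\<dots> \<le> (\<integral>\<^sup>+ v. ennreal c \<partial>unifm)"
  proof (intro nn_integral_mono_AE)
    show "AE v in unifm. (\<integral>\<^sup>+ w. ennreal (f (Y (L (scaled_queue q) v) \<mu> w)) \<partial>unifm) \<le> ennreal c"
      using AE_unifm
    proof eventually_elim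
      case (elim v)
      have "integrable unifm (\<lambda>w. f (Y (L (scaled_queue q) v) \<mu> w))"
      proof (rule finite_measure.integrable_const_bound[where B = B])
        show "finite_measure unifm" using prob_space_unifm by (simp add: prob_space_def)
        show "(\<lambda>w. f (Y (L (scaled_queue q) v) \<mu> w)) \<in> borel_measurable unifm"
          using L_sort elim by (intro measurable_compose[OF measurable_Y]) auto
      qed (use nonneg bounded in simp)
      then have "(\<integral>\<^sup>+ w. ennreal (f (Y (L (scaled_queue q) v) \<mu> w)) \<partial>unifm)
          = ennreal (\<integral>w. f (Y (L (scaled_queue q) v) \<mu> w) \<partial>unifm)"
        using nonneg by (intro nn_integral_eq_integral) auto
      then show ?case using le[OF elim] by (simp add: ennreal_leI)
    qed
  qed
  also have "\<dots> = ennreal c"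
    using prob_space.emeasure_space_1[OF prob_space_unifm] by simp
  finally show ?thesis using c by (simp add: ennreal_le_iff)
qed

lemma sum_slot_drift_frame:
  "(\<Sum>i<T. slot_drift q (ph ! i)) = real n * lam * frame_load q ph - real T * (\<Sum>l<n. scaled_queue q l * \<mu> l)"
proof -
  have count: "(\<Sum>i<T. if l = ph ! i then c else 0) = c * real (frame_count ph l)" for l and c :: real
  proof -
    have "(\<Sum>i<T. if l = ph ! i then c else 0) = (\<Sum>i\<in>{i \<in> {..<T}. ph ! i = l}. c)"
      by (subst sum.inter_filter) (auto intro!: sum.cong)
    also have "{i \<in> {..<T}. ph ! i = l} = {i. i < T \<and> ph ! i = l}" by auto
    finally show ?thesis by (simp add: frame_count_def)
  qed
  have "(\<Sum>i<T. slot_drift q (ph ! i))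
      = (\<Sum>l<n. \<Sum>i<T. scaled_queue q l * ((if l = ph ! i then real n * lam else 0) - \<mu> l))"
    unfolding slot_drift_def by (rule sum.swap)
  also have "\<dots> = (\<Sum>l<n. real n * lam * (scaled_queue q l * real (frame_count ph l))
      - real T * (scaled_queue q l * \<mu> l))"
    by (intro sum.cong refl) (simp add: sum_distrib_left[symmetric] sum_subtractf count algebra_simps)
  finally show ?thesis by (simp add: frame_load_def sum_subtractf sum_distrib_left)
qed

lemma frame_drift:
  "measure_pmf.expectation (frame_pmf q) (\<lambda>ph. frame_lyapunov ph 0 T q)
     \<le> lyapunov q - 2 * real T * stability_margin * scaled_total q / real n
       + real T * quad_const + 2 * real T ^ 2 * lin_const"
proof -
  let ?E = "measure_pmf.expectation (frame_pmf q)"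
  have int: "integrable (measure_pmf (frame_pmf q)) (f :: nat list \<Rightarrow> real)" for f
    by (rule integrable_measure_pmf_finite[OF finite_set_frame_pmf])
  have load: "?E (\<lambda>ph. real n * lam * frame_load q ph)
      \<le> real T * ((\<Sum>l<n. scaled_queue q l * \<mu> l) - stability_margin * scaled_total q / real n)"
  proof (rule expectation_frame_pmf_le)
    show "0 \<le> real n * lam * frame_load q ph" for ph
      using lam_nonneg frame_load_nonneg by simp
    show "real n * lam * frame_load q ph \<le> real n * lam * (real T * scaled_total q)" for ph
      using lam_nonneg frame_load_le by (simp add: mult_left_mono)
  qed (use expected_frame_load_le in simp)
  have "?E (\<lambda>ph. frame_lyapunov ph 0 T q)
      \<le> ?E (\<lambda>ph. lyapunov q + 2 * (real n * lam * frame_load q ph - real T * (\<Sum>l<n. scaled_queue q l * \<mu> l))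
            + real T * quad_const + 2 * real T ^ 2 * lin_const)"
    using frame_lyapunov_le[of _ 0 T q] by (intro integral_mono int) (simp add: sum_slot_drift_frame)
  also have "\<dots> = lyapunov q + 2 * (?E (\<lambda>ph. real n * lam * frame_load q ph) - real T * (\<Sum>l<n. scaled_queue q l * \<mu> l))
            + real T * quad_const + 2 * real T ^ 2 * lin_const"
    by (simp add: int integral_add integral_diff)
  also have "\<dots> \<le> lyapunov q - 2 * real T * stability_margin * scaled_total q / real n
       + real T * quad_const + 2 * real T ^ 2 * lin_const"
    using load by (simp add: right_diff_distrib)
  finally show ?thesis .
qed

section \<open>Positive recurrence\<close>

text \<open>Inside a frame \<open>frame_lyapunov\<close> is a martingale and \<open>T - j\<close> decreases by one; at the end
  of a frame \<open>frame_drift\<close> makes up for the reset of \<open>T - j\<close> once the queues are large.\<close>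

definition chain_lyapunov :: "qstate \<Rightarrow> real" where
  "chain_lyapunov = (\<lambda>(q, ph, j). frame_lyapunov ph j (T - j) q + real (T - j))"

definition scaled_jump_bound :: real where
  "scaled_jump_bound = (\<Sum>l<n. jump_bound / \<gamma> l)"

text \<open>Large enough that, even after one more slot, the negative term of \<open>frame_drift\<close> beats
  its constants plus the \<open>T\<close> slots of the next frame.\<close>

definition small_radius :: real where
  "small_radius = scaled_jump_bound
     + real n * (real T * quad_const + 2 * real T ^ 2 * lin_const + real T) / (2 * real T * stability_margin)"

definition small_set :: "qstate set" where
  "small_set = {(q, ph, j). valid_state n T (q, ph, j) \<and> j = T - 1 \<and> scaled_total q < small_radius}"

lemma chain_lyapunov_nonneg: "0 \<le> chain_lyapunov x"
  by (cases x) (simp add: chain_lyapunov_def frame_lyapunov_nonneg)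

lemma scaled_total_queue_update_ge:
  assumes a: "a \<in> set_pmf pA" and s: "s \<in> set_pmf pS"
  shows "scaled_total q - scaled_jump_bound \<le> scaled_total (queue_update n q z a s)"
proof -
  have "scaled_queue q l - jump_bound / \<gamma> l \<le> scaled_queue (queue_update n q z a s) l" if l: "l < n" for l
  proof -
    have "\<gamma> l > 0" using gamma_pos l by auto
    moreover have "real (q ! l) - jump_bound \<le> real (queue_update n q z a s ! l)"
      using queue_update_change_le[OF l a s, of q z] by linarith
    ultimately show ?thesis by (simp add: scaled_queue_def diff_divide_distrib[symmetric] divide_right_mono)
  qed
  then show ?thesis
    unfolding scaled_total_def scaled_jump_bound_def sum_subtractf[symmetric] by (intro sum_mono) auto
qed

lemma valid_state_iff: "valid_state n T (q, ph, j) \<longleftrightarrow> length q = n \<and> ph \<in> frames \<and> j < T"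
  by (auto simp: valid_state_def frames_def)

lemma set_step_pmf_valid:
  assumes "valid_state n T x"
  shows "set_pmf (step_pmf x) \<subseteq> {x. valid_state n T x}"
proof -
  obtain q ph j where x: "x = (q, ph, j)" by (cases x)
  have "ph \<in> frames" "j < T" using assms x by (auto simp: valid_state_iff)
  then show ?thesis
    unfolding x step_pmf_def using T_pos
    by (auto simp: Let_def valid_state_iff split: if_splits intro: subsetD[OF set_frame_pmf])
qed

lemma expectation_step_pmf:
  fixes f :: "qstate \<Rightarrow> real"
  shows "measure_pmf.expectation (step_pmf (q, ph, j)) f =
     EA (\<lambda>a. ES (\<lambda>s. let q' = queue_update n q (ph ! j) a s in
       if Suc j < T then f (q', ph, Suc j) else measure_pmf.expectation (frame_pmf q') (\<lambda>ph'. f (q', ph', 0))))"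
proof -
  have "measure_pmf.expectation (if Suc j < T then return_pmf (q', ph, Suc j)
      else bind_pmf (frame_pmf q') (\<lambda>ph'. return_pmf (q', ph', 0))) f
    = (if Suc j < T then f (q', ph, Suc j) else measure_pmf.expectation (frame_pmf q') (\<lambda>ph'. f (q', ph', 0)))"
    for q' by (simp add: expectation_bind_pmf_finite finite_set_frame_pmf)
  then show ?thesis
    unfolding step_pmf_def Let_def prod.case
    by (simp add: expectation_bind_pmf_finite finite_set_pmf_pA finite_set_pmf_pS finite_set_frame_pmf)
qed

lemma chain_lyapunov_drift_inside_frame:
  assumes "Suc j < T"
  shows "measure_pmf.expectation (step_pmf (q, ph, j)) chain_lyapunov + 1 = chain_lyapunov (q, ph, j)"
proof -
  have "T - j = Suc (T - Suc j)" using assms by simp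
  then show ?thesis
    using assms by (simp add: expectation_step_pmf chain_lyapunov_def Let_def)
qed

lemma chain_lyapunov_drift_frame_end:
  assumes j: "Suc j = T" and large: "small_radius \<le> scaled_total q"
  shows "measure_pmf.expectation (step_pmf (q, ph, j)) chain_lyapunov + 1 \<le> chain_lyapunov (q, ph, j)"
proof -
  let ?q' = "\<lambda>a s. queue_update n q (ph ! j) a s"
  have "measure_pmf.expectation (step_pmf (q, ph, j)) chain_lyapunov
      = EA (\<lambda>a. ES (\<lambda>s. measure_pmf.expectation (frame_pmf (?q' a s))
          (\<lambda>ph'. frame_lyapunov ph' 0 T (?q' a s) + real T)))"
    using j by (simp add: expectation_step_pmf chain_lyapunov_def Let_def)
  also have "\<dots> \<le> EA (\<lambda>a. ES (\<lambda>s. lyapunov (?q' a s)))"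
  proof (intro expectation_mono_pmf_finite finite_set_pmf_pA finite_set_pmf_pS)
    fix a s assume a: "a \<in> set_pmf pA" and s: "s \<in> set_pmf pS"
    define c where "c = real T * quad_const + 2 * real T ^ 2 * lin_const + real T"
    have "real n * c / (2 * real T * stability_margin) \<le> scaled_total (?q' a s)"
      using large scaled_total_queue_update_ge[OF a s, of q "ph ! j"] by (simp add: small_radius_def c_def)
    then have "c \<le> 2 * real T * stability_margin * scaled_total (?q' a s) / real n"
      using T_pos n_pos stability_margin_pos by (simp add: field_simps)
    moreover have "measure_pmf.expectation (frame_pmf (?q' a s)) (\<lambda>ph'. frame_lyapunov ph' 0 T (?q' a s) + real T)
        = measure_pmf.expectation (frame_pmf (?q' a s)) (\<lambda>ph'. frame_lyapunov ph' 0 T (?q' a s)) + real T"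
      by (simp add: integrable_measure_pmf_finite[OF finite_set_frame_pmf])
    ultimately show "measure_pmf.expectation (frame_pmf (?q' a s)) (\<lambda>ph'. frame_lyapunov ph' 0 T (?q' a s) + real T)
        \<le> lyapunov (?q' a s)"
      using frame_drift[of "?q' a s"] unfolding c_def by linarith
  qed
  also have "\<dots> + 1 = chain_lyapunov (q, ph, j)"
  proof -
    have "T - j = Suc 0" using j by simp
    then show ?thesis by (simp add: chain_lyapunov_def)
  qed
  finally show ?thesis by simp
qed

lemma finite_small_set: "finite small_set"
proof -
  define B where "B = nat \<lceil>small_radius * (\<Sum>l<n. \<gamma> l)\<rceil>"
  have "small_set \<subseteq> (\<lambda>(q, ph). (q, ph, T - 1)) ` ({q. set q \<subseteq> {..B} \<and> length q = n} \<times> frames)"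
  proof
    fix x assume "x \<in> small_set"
    then obtain q ph where x: "x = (q, ph, T - 1)" and q: "length q = n" and ph: "ph \<in> frames"
      and small: "scaled_total q < small_radius"
      by (auto simp: small_set_def valid_state_iff)
    have "q ! l \<le> B" if l: "l < n" for l
    proof -
      have g: "\<gamma> l > 0" using gamma_pos l by auto
      have "scaled_queue q l \<le> scaled_total q"
        unfolding scaled_total_def using scaled_queue_nonneg l by (intro member_le_sum) auto
      then have "real (q ! l) / \<gamma> l < small_radius"
        using small by (simp add: scaled_queue_def)
      then have "real (q ! l) < small_radius * \<gamma> l"
        using g by (simp add: divide_less_eq)
      also have "\<dots> \<le> small_radius * (\<Sum>l<n. \<gamma> l)"
      proof (intro mult_left_mono member_le_sum)
        have "0 \<le> scaled_total q" unfolding scaled_total_def using scaled_queue_nonneg by (intro sum_nonneg) auto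
        then show "0 \<le> small_radius" using small by simp
      qed (use gamma_pos l in \<open>auto intro: less_imp_le\<close>)
      finally show ?thesis unfolding B_def by linarith
    qed
    then have "set q \<subseteq> {..B}" using q by (auto simp: in_set_conv_nth)
    then show "x \<in> (\<lambda>(q, ph). (q, ph, T - 1)) ` ({q. set q \<subseteq> {..B} \<and> length q = n} \<times> frames)"
      unfolding x using q ph by (intro image_eqI[where x = "(q, ph)"]) auto
  qed
  moreover have "finite {q. set q \<subseteq> {..B} \<and> length q = n}" by (rule finite_lists_length_eq) simp
  ultimately show ?thesis
    using finite_frames by (blast intro: finite_subset finite_imageI finite_cartesian_product)
qed

lemma positive_recurrent_step_pmf:
  "positive_recurrent (\<lambda>x. measure_pmf (step_pmf x)) {x. valid_state n T x}"
proof (rule positive_recurrent_Foster[where V = chain_lyapunov and C = small_set])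
  fix x assume "x \<in> {x. valid_state n T x}" "x \<notin> small_set"
  moreover obtain q ph j where x: "x = (q, ph, j)" by (cases x)
  ultimately show "measure_pmf.expectation (step_pmf x) chain_lyapunov + 1 \<le> chain_lyapunov x"
    using chain_lyapunov_drift_inside_frame[of j] chain_lyapunov_drift_frame_end[of j q]
    by (cases "Suc j < T") (auto simp: small_set_def valid_state_iff)
next
  show "small_set \<subseteq> {x. valid_state n T x}" by (auto simp: small_set_def)
qed (simp_all add: set_step_pmf_valid chain_lyapunov_nonneg finite_small_set
       integrable_measure_pmf_finite finite_set_step_pmf)

end

theorem theorem1:
  fixes n T :: nat
    and lam sigma_lam Amax :: real and Smax :: nat
    and \<mu> \<sigma> \<gamma> :: "nat \<Rightarrow> real"
    and pA :: "nat pmf" and pS :: "nat list pmf"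
    and L :: "(nat \<Rightarrow> real) \<Rightarrow> real \<Rightarrow> (nat \<Rightarrow> nat)"
    and Y :: "(nat \<Rightarrow> nat) \<Rightarrow> (nat \<Rightarrow> real) \<Rightarrow> real \<Rightarrow> nat list"
  assumes n_pos: "n \<ge> 1" and T_pos: "T \<ge> 1"
    and arr_mean: "measure_pmf.expectation pA real = real n * lam"
    and arr_var: "measure_pmf.variance pA real = real n * sigma_lam\<^sup>2"
    and arr_bd: "\<forall>a\<in>set_pmf pA. real a \<le> real n * Amax"
    and srv_len: "\<forall>s\<in>set_pmf pS. length s = n \<and> (\<forall>l<n. s ! l \<le> Smax)"
    and srv_mean: "\<forall>l<n. measure_pmf.expectation pS (\<lambda>s. real (s ! l)) = \<mu> l"
    and srv_var: "\<forall>l<n. measure_pmf.variance pS (\<lambda>s. real (s ! l)) = (\<sigma> l)\<^sup>2"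
    and mu_pos: "\<forall>l<n. \<mu> l > 0"
    and mu_sorted: "\<forall>l l'. l \<le> l' \<longrightarrow> l' < n \<longrightarrow> \<mu> l \<le> \<mu> l'"
    and gamma_pos: "\<forall>l<n. \<gamma> l > 0"
    and L_meas: "\<forall>x. L x \<in> measurable borel (count_space UNIV)"
    and L_sort: "\<forall>x v. v \<in> {0..1} \<longrightarrow> L x v permutes {..<n} \<and>
                   (\<forall>i j. i \<le> j \<longrightarrow> j < n \<longrightarrow> x (L x v i) \<ge> x (L x v j))"
    and Y_meas: "\<forall>\<eta>. \<eta> permutes {..<n} \<longrightarrow> Y \<eta> \<mu> \<in> measurable borel (count_space UNIV)"
    and Y_range: "\<forall>\<eta> w. \<eta> permutes {..<n} \<longrightarrow> w \<in> {0..1} \<longrightarrow>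
                   length (Y \<eta> \<mu> w) = T \<and> (\<forall>i\<in>set (Y \<eta> \<mu> w). i < n)"
    and stab: "\<forall>\<eta>. \<eta> permutes {..<n} \<longrightarrow> (\<forall>m\<in>{1..n}.
                 real n * lam * (\<Sum>l<m. f_stat T Y \<mu> \<eta> l) < (\<Sum>l<m. \<mu> (\<eta> l)))"
  shows "positive_recurrent (dispatch_kernel n T \<gamma> \<mu> L Y pA pS) {x. valid_state n T x}"
proof -
  interpret dispatch_system n T lam Amax Smax \<mu> \<gamma> pA pS L Y
    using n_pos T_pos arr_mean arr_bd srv_len srv_mean gamma_pos L_meas L_sort Y_meas Y_range stab
    by unfold_locales
  show ?thesis
    unfolding dispatch_kernel_eq_step_pmf by (rule positive_recurrent_step_pmf)
qed

end
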